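(* Let $q=p^m$ with $p$ prime, $3\le k\le n\le q$, $\alpha=(\alpha_1,\dots,\alpha_n)\in\mathbb{F}_q^n$ with pairwise distinct entries, $v\in(\mathbb{F}_q^* )^n$, $\eta\in\mathbb{F}_q^*$, $\delta\in\mathbb{F}_q$, and let $\mathcal{C}$ be the code of length $n+3$ defined in the context. If $3\le k\le n-4$, then $\mathcal{C}$ is of non-GRS type, i.e. it is not monomially equivalent to any generalized Reed–Solomon code.
   Context: Let $\mathcal{S}=\{f(x)=\sum_{i=0}^{k-1}f_ix^i+\eta f_{k-1}x^{k+2}:f_i\in\mathbb{F}_q\}$ and $\mathcal{C}=\{(v_1f(\alpha_1),\dots,v_nf(\alpha_n),f_{k-1},f_{k-2},f_{k-3}+\delta f_{k-1}):f\in\mathcal{S}\}\subseteq\mathbb{F}_q^{n+3}$, where $f_j$ is the coefficient of $x^j$ ($j\le k-1$). A generalized Reed–Solomon (GRS) code of length $N$ and dimension $k$ is $\{(w_1g(\beta_1),\dots,w_Ng(\beta_N)):g\in\mathbb{F}_q[x],\deg g<k\}$ for pairwise distinct $\beta_i\in\mathbb{F}_q$ and $w_i\in\mathbb{F}_q^*$. Two codes of the same length are monomially equivalent if $GM$ generates the second code for some generator matrix $G$ of the first and some monomial matrix $M$. *)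

theory Defs
  imports "HOL-Computational_Algebra.Polynomial" "HOL-Combinatorics.Permutations"
begin

definition GRS_code :: "nat \<Rightarrow> nat \<Rightarrow> (nat \<Rightarrow> 'a::field) \<Rightarrow> (nat \<Rightarrow> 'a) \<Rightarrow> 'a list set" where
  "GRS_code N k beta w =
     {map (\<lambda>i. w i * poly g (beta i)) [0..<N] | g. g = 0 \<or> degree g < k}"

definition is_GRS_code :: "nat \<Rightarrow> nat \<Rightarrow> 'a::field list set \<Rightarrow> bool" where
  "is_GRS_code N k D \<longleftrightarrow>
     (\<exists>beta w. inj_on beta {..<N} \<and> (\<forall>i<N. w i \<noteq> 0) \<and> D = GRS_code N k beta w)"

text \<open>Action of a monomial matrix M (permutation sigma, nonzero scalars lam) on a row vector:
  (c M)_j = lam_j * c_{sigma j}.\<close>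
definition monomial_act :: "nat \<Rightarrow> (nat \<Rightarrow> nat) \<Rightarrow> (nat \<Rightarrow> 'a::field) \<Rightarrow> 'a list \<Rightarrow> 'a list" where
  "monomial_act N sigma lam c = map (\<lambda>j. lam j * c ! sigma j) [0..<N]"

text \<open>Monomial equivalence of two codes of length N: the second is the image of the first
  under a monomial matrix (GM generates D iff D = {cM | c in C}).\<close>
definition monomially_equivalent :: "nat \<Rightarrow> 'a::field list set \<Rightarrow> 'a list set \<Rightarrow> bool" where
  "monomially_equivalent N C D \<longleftrightarrow>
     (\<exists>sigma lam. sigma permutes {..<N} \<and> (\<forall>j<N. lam j \<noteq> 0) \<and>
        D = monomial_act N sigma lam ` C)"

definition S_poly :: "nat \<Rightarrow> 'a::field \<Rightarrow> (nat \<Rightarrow> 'a) \<Rightarrow> 'a poly" where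
  "S_poly k eta fc = (\<Sum>i<k. monom (fc i) i) + monom (eta * fc (k - 1)) (k + 2)"

definition code_C :: "nat \<Rightarrow> nat \<Rightarrow> (nat \<Rightarrow> 'a::field) \<Rightarrow> (nat \<Rightarrow> 'a) \<Rightarrow> 'a \<Rightarrow> 'a \<Rightarrow> 'a list set" where
  "code_C n k alpha v eta delta =
     {map (\<lambda>i. v i * poly (S_poly k eta fc) (alpha i)) [0..<n]
        @ [fc (k - 1), fc (k - 2), fc (k - 3) + delta * fc (k - 1)] | fc. True}"

end

theory Submission
  imports Defs
begin

text \<open>In a GRS code of dimension \<open>k'\<close> a codeword vanishing on \<open>k' - 1\<close> prescribed coordinates
  \<open>Z\<close> is, up to a scalar, \<open>\<mu>\<^sub>i \<Prod>z\<in>Z. (\<gamma>\<^sub>i - \<gamma>\<^sub>z)\<close>. Hence if \<open>c\<^sub>1, \<dots>, c\<^sub>4\<close> vanish on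
  \<open>Z\<^sub>1, \<dots>, Z\<^sub>4\<close> with \<open>Z\<^sub>1 \<union> Z\<^sub>2 = Z\<^sub>3 \<union> Z\<^sub>4\<close> and \<open>Z\<^sub>1 \<inter> Z\<^sub>2 = Z\<^sub>3 \<inter> Z\<^sub>4\<close>, the coordinatewise
  products \<open>c\<^sub>1 c\<^sub>2\<close> and \<open>c\<^sub>3 c\<^sub>4\<close> are proportional.

  A code monomially equivalent to a GRS code is itself GRS, and for \<open>C\<close> necessarily \<open>k' \<le> k\<close>.
  Codewords of \<open>C\<close> given by products of factors \<open>x - \<alpha>\<^sub>t\<close> get their remaining zeros from the
  three extra coordinates \<open>(f\<^sub>k\<^sub>-\<^sub>1, f\<^sub>k\<^sub>-\<^sub>2, f\<^sub>k\<^sub>-\<^sub>3 + \<delta> f\<^sub>k\<^sub>-\<^sub>1)\<close>. For \<open>k \<ge> 4\<close> a suitable quadruple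
  makes \<open>\<alpha>\<^sub>i\<close> constant for \<open>k - 2 \<le> i < n\<close>. For \<open>k = 3\<close> the words with \<open>f\<^sub>2 = 1\<close> contain the term
  \<open>\<eta> x\<^sup>5\<close>, and proportionality makes a polynomial of degree at most 6 vanish at the \<open>n \<ge> 7\<close>
  points \<open>\<alpha>\<^sub>i\<close>; its coefficients of \<open>x\<^sup>6\<close> and \<open>x\<^sup>5\<close> then force \<open>\<alpha>\<^sub>0 = \<alpha>\<^sub>1\<close>.\<close>

definition root_poly :: "('b \<Rightarrow> 'a) \<Rightarrow> 'b set \<Rightarrow> 'a::idom poly" where
  "root_poly r Z = (\<Prod>z\<in>Z. [:- r z, 1:])"

lemma degree_root_poly: "finite Z \<Longrightarrow> degree (root_poly r Z) = card Z"
  unfolding root_poly_def by (subst degree_prod_eq_sum_degree) auto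

lemma coeff_root_poly_card: "finite Z \<Longrightarrow> coeff (root_poly r Z) (card Z) = 1"
  using degree_root_poly[of Z r, symmetric] by (simp add: root_poly_def lead_coeff_prod)

lemma poly_root_poly: "poly (root_poly r Z) x = (\<Prod>z\<in>Z. x - r z)"
  unfolding root_poly_def by (simp add: poly_prod)

lemma poly_root_poly_eq_0_iff: "finite Z \<Longrightarrow> poly (root_poly r Z) x = 0 \<longleftrightarrow> x \<in> r ` Z"
  by (auto simp: poly_root_poly)

lemma poly_root_poly_at_point_eq_0_iff:
  assumes "inj_on r A" "T \<subseteq> A" "finite T" "i \<in> A"
  shows "poly (root_poly r T) (r i) = 0 \<longleftrightarrow> i \<in> T"
  using assms inj_on_image_mem_iff[OF assms(1)] by (simp add: poly_root_poly_eq_0_iff)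

lemma root_poly_union_inter:
  "finite A \<Longrightarrow> finite B \<Longrightarrow>
     root_poly r A * root_poly r B = root_poly r (A \<union> B) * root_poly r (A \<inter> B)"
  unfolding root_poly_def by (simp add: prod.union_inter)

lemma poly_eq_smult_root_poly:
  fixes g :: "'a::idom poly"
  assumes "finite Z" "inj_on r Z" "degree g \<le> card Z" "\<forall>z\<in>Z. poly g (r z) = 0"
  shows "g = smult (coeff g (card Z)) (root_poly r Z)"
proof (rule poly_eqI_degree_lead_coeff[where n = "card Z" and A = "r ` Z"])
  show "coeff g (card Z) = coeff (smult (coeff g (card Z)) (root_poly r Z)) (card Z)"
    using assms(1) by (simp add: coeff_root_poly_card)
  show "degree (smult (coeff g (card Z)) (root_poly r Z)) \<le> card Z"
    using assms(1) degree_smult_le[of _ "root_poly r Z"] by (simp add: degree_root_poly)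
qed (use assms in \<open>auto simp: card_image poly_root_poly_eq_0_iff\<close>)

lemma poly_eq_0_if_roots:
  fixes p :: "'a::idom poly"
  assumes "finite A" "\<forall>x\<in>A. poly p x = 0" "\<forall>j\<ge>card A. coeff p j = 0"
  shows "p = 0"
proof (rule ccontr)
  assume "p \<noteq> 0"
  then have "degree p < card A"
    using assms(3) by (intro degree_lessI) auto
  then show False
    using poly_eqI_degree[of A p 0] assms(2) \<open>p \<noteq> 0\<close> by auto
qed

lemma coeff_mult_linear_Suc:
  fixes p :: "'a::comm_ring_1 poly"
  shows "coeff (p * [:- a, 1:]) (Suc d) = coeff p d - a * coeff p (Suc d)"
proof -
  have "p * [:- a, 1:] = smult (- a) p + pCons 0 p"
    by (simp add: mult.commute)
  then show ?thesis
    by simp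
qed

lemma staircase_root_poly:
  fixes alpha :: "nat \<Rightarrow> 'a::field"
  assumes "4 \<le> k"
  obtains f2 s where "degree f2 = k - 2" "coeff f2 (k - 3) = 0"
    "\<forall>t\<in>insert (k - 3) {..<k - 4}. poly f2 (alpha t) = 0"
    "root_poly alpha {..<k - 3} * f2
       = root_poly alpha {..<k - 2} * root_poly alpha {..<k - 4} * [:- s, 1:]"
proof -
  define T where "T = insert (k - 3) {..<k - 4}"
  define s where "s = coeff (root_poly alpha T) (k - 4)"
  have T: "finite T" "card T = Suc (k - 4)"
      "{..<k - 3} \<union> T = {..<k - 2}" "{..<k - 3} \<inter> T = {..<k - 4}"
    using assms by (auto simp: T_def)
  have "k - 3 = Suc (k - 4)"
    using assms by simp
  then have "coeff (root_poly alpha T * [:- s, 1:]) (k - 3)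
          = coeff (root_poly alpha T) (k - 4) - s * coeff (root_poly alpha T) (Suc (k - 4))"
    by (simp only: coeff_mult_linear_Suc)
  also have "\<dots> = 0"
    using coeff_root_poly_card[OF T(1), of alpha] T(2) by (simp add: s_def)
  finally have "coeff (root_poly alpha T * [:- s, 1:]) (k - 3) = 0" .
  moreover have "root_poly alpha T \<noteq> 0"
    using coeff_root_poly_card[OF T(1), of alpha] by auto
  then have "degree (root_poly alpha T * [:- s, 1:]) = k - 2"
    using assms T by (subst degree_mult_eq) (auto simp: degree_root_poly)
  moreover have "\<forall>t\<in>T. poly (root_poly alpha T * [:- s, 1:]) (alpha t) = 0"
    using T(1) by (simp add: poly_root_poly_eq_0_iff)
  moreover have "root_poly alpha {..<k - 3} * (root_poly alpha T * [:- s, 1:])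
      = root_poly alpha {..<k - 2} * root_poly alpha {..<k - 4} * [:- s, 1:]"
    using root_poly_union_inter[of "{..<k - 3}" T alpha] T by (metis finite_lessThan mult.assoc)
  ultimately show ?thesis
    using that unfolding T_def by blast
qed

lemma coeff_quintic_times_linear:
  fixes eta a b :: "'a::comm_ring_1"
  defines "U \<equiv> monom 1 2 + monom eta 5 - [:a:]"
  shows "coeff (U * [:- b, 1:]) 6 = eta" "coeff (U * [:- b, 1:]) 5 = - b * eta"
    and "6 \<le> d \<Longrightarrow> coeff (U * [:- b, 1:]) (Suc d) = 0"
  using coeff_mult_linear_Suc[of U b 5] coeff_mult_linear_Suc[of U b 4]
    coeff_mult_linear_Suc[of U b d] by (simp_all add: U_def coeff_monom coeff_pCons')

lemma quintic_relation_impossible: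
  fixes alpha :: "nat \<Rightarrow> 'a::field" and eta K :: 'a
  defines "u x \<equiv> x ^ 2 + eta * x ^ 5"
  assumes alpha: "inj_on alpha {..<n}" and n: "7 \<le> n" and eta: "eta \<noteq> 0"
    and relation: "\<forall>i<n. (alpha i - alpha 0) * (u (alpha i) - u (alpha 1))
                     = K * ((alpha i - alpha 1) * (u (alpha i) - u (alpha 0)))"
  shows False
proof -
  define U where "U a = monom 1 2 + monom eta 5 - [:a:]" for a
  define p where
    "p = U (u (alpha 1)) * [:- alpha 0, 1:] - smult K (U (u (alpha 0)) * [:- alpha 1, 1:])"
  have poly_U: "poly (U a) x = u x - a" for a x
    by (simp add: U_def u_def poly_monom)
  have "p = 0"
  proof (rule poly_eq_0_if_roots[of "alpha ` {..<n}"])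
    show "\<forall>x\<in>alpha ` {..<n}. poly p x = 0"
      using relation by (auto simp: p_def poly_U algebra_simps)
    have "card (alpha ` {..<n}) = n"
      using alpha by (simp add: card_image)
    show "\<forall>j\<ge>card (alpha ` {..<n}). coeff p j = 0"
    proof (intro allI impI)
      fix j assume "card (alpha ` {..<n}) \<le> j"
      then have "j = Suc (j - 1)" "6 \<le> j - 1"
        using n \<open>card (alpha ` {..<n}) = n\<close> by auto
      then show "coeff p j = 0"
        by (metis p_def U_def coeff_diff coeff_smult coeff_quintic_times_linear(3) diff_zero
            mult_zero_right)
    qed
  qed simp
  then have "coeff p 6 = 0" "coeff p 5 = 0"
    by simp_all
  then have "eta - K * eta = 0" "- alpha 0 * eta - K * (- alpha 1 * eta) = 0"
    by (simp_all only: p_def U_def coeff_diff coeff_smult coeff_quintic_times_linear)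
  then have "alpha 0 = alpha 1"
    using eta by (auto simp: algebra_simps)
  then show False
    using n inj_onD[OF alpha, of 0 1] by auto
qed

lemma GRS_code_image:
  "GRS_code N k \<beta> w = (\<lambda>g. map (\<lambda>i. w i * poly g (\<beta> i)) [0..<N]) ` {g. g = 0 \<or> degree g < k}"
  unfolding GRS_code_def by blast

lemma monomial_act_GRS_word:
  assumes "\<sigma> permutes {..<N}"
  shows "monomial_act N \<sigma> lam (map (\<lambda>i. w i * poly g (\<beta> i)) [0..<N])
           = map (\<lambda>i. (lam i * w (\<sigma> i)) * poly g (\<beta> (\<sigma> i))) [0..<N]"
  using permutes_in_image[OF assms] by (simp add: monomial_act_def)

lemma is_GRS_code_monomial_image:
  assumes "is_GRS_code N k D" "\<sigma> permutes {..<N}" "\<forall>j<N. lam j \<noteq> 0"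
  shows "is_GRS_code N k (monomial_act N \<sigma> lam ` D)"
proof -
  obtain \<beta> w where \<beta>: "inj_on \<beta> {..<N}" and w: "\<forall>i<N. w i \<noteq> 0"
    and D: "D = GRS_code N k \<beta> w"
    using assms(1) unfolding is_GRS_code_def by blast
  have \<sigma>_image: "\<sigma> ` {..<N} = {..<N}"
    using assms(2) by (rule permutes_image)
  have "inj_on (\<beta> \<circ> \<sigma>) {..<N}"
    using \<beta> permutes_inj_on[OF assms(2)] by (simp add: comp_inj_on \<sigma>_image)
  moreover have "\<forall>i<N. lam i * w (\<sigma> i) \<noteq> 0"
    using assms(3) w permutes_in_image[OF assms(2)] by simp
  moreover have "monomial_act N \<sigma> lam ` D = GRS_code N k (\<beta> \<circ> \<sigma>) (\<lambda>i. lam i * w (\<sigma> i))"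
    unfolding D GRS_code_image image_image monomial_act_GRS_word[OF assms(2)] by simp
  ultimately show ?thesis
    unfolding is_GRS_code_def by (intro exI conjI)
qed

lemma monomial_act_inverse:
  assumes \<sigma>: "\<sigma> permutes {..<N}" and lam: "\<forall>j<N. lam j \<noteq> 0" and "length c = N"
  shows "monomial_act N (inv \<sigma>) (\<lambda>j. inverse (lam (inv \<sigma> j))) (monomial_act N \<sigma> lam c) = c"
proof (rule nth_equalityI)
  fix j assume "j < length (monomial_act N (inv \<sigma>) (\<lambda>j. inverse (lam (inv \<sigma> j)))
                              (monomial_act N \<sigma> lam c))"
  then have j: "j < N"
    by (simp add: monomial_act_def)
  have "inv \<sigma> j < N"
    using j permutes_in_image[OF permutes_inv[OF \<sigma>]] by simp
  then show "monomial_act N (inv \<sigma>) (\<lambda>j. inverse (lam (inv \<sigma> j))) (monomial_act N \<sigma> lam c) ! j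
               = c ! j"
    using j lam permutes_inverses(1)[OF \<sigma>] by (simp add: monomial_act_def)
qed (simp add: monomial_act_def assms(3))

lemma monomially_equivalent_sym:
  assumes "monomially_equivalent N C D" "\<forall>c\<in>C. length c = N"
  shows "monomially_equivalent N D C"
proof -
  obtain \<sigma> lam where \<sigma>: "\<sigma> permutes {..<N}" and lam: "\<forall>j<N. lam j \<noteq> 0"
    and D: "D = monomial_act N \<sigma> lam ` C"
    using assms(1) unfolding monomially_equivalent_def by blast
  define lam' where "lam' j = inverse (lam (inv \<sigma> j))" for j
  have "monomial_act N (inv \<sigma>) lam' ` D
          = (\<lambda>c. monomial_act N (inv \<sigma>) lam' (monomial_act N \<sigma> lam c)) ` C"
    unfolding D image_image ..
  also have "\<dots> = id ` C"
    using monomial_act_inverse[OF \<sigma> lam] assms(2) unfolding lam'_def by (intro image_cong) auto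
  finally have "C = monomial_act N (inv \<sigma>) lam' ` D"
    by simp
  moreover have "\<forall>j<N. lam' j \<noteq> 0"
    using lam permutes_in_image[OF permutes_inv[OF \<sigma>]] by (simp add: lam'_def)
  ultimately show ?thesis
    unfolding monomially_equivalent_def using permutes_inv[OF \<sigma>] by blast
qed

lemma is_GRS_code_if_monomially_equivalent:
  assumes "is_GRS_code N k D" "monomially_equivalent N C D" "\<forall>c\<in>C. length c = N"
  shows "is_GRS_code N k C"
  using monomially_equivalent_sym[OF assms(2,3)] is_GRS_code_monomial_image[OF assms(1)]
  unfolding monomially_equivalent_def by blast

lemma GRS_codeword_vanishing_on:
  fixes \<gamma> \<mu> :: "nat \<Rightarrow> 'a::field"
  assumes \<gamma>: "inj_on \<gamma> {..<N}" and \<mu>: "\<forall>i<N. \<mu> i \<noteq> 0"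
    and c: "c \<in> GRS_code N k \<gamma> \<mu>" and Z: "Z \<subseteq> {..<N}" "k \<le> Suc (card Z)"
    and vanish: "\<forall>z\<in>Z. c ! z = 0"
  shows "\<exists>K. \<forall>i<N. c ! i = K * \<mu> i * poly (root_poly \<gamma> Z) (\<gamma> i)"
proof -
  obtain g where g: "g = 0 \<or> degree g < k" and c_eq: "c = map (\<lambda>i. \<mu> i * poly g (\<gamma> i)) [0..<N]"
    using c unfolding GRS_code_def by blast
  have "finite Z"
    using Z(1) finite_subset by blast
  moreover have "inj_on \<gamma> Z"
    using \<gamma> Z(1) by (rule inj_on_subset)
  moreover have "degree g \<le> card Z"
    using g Z(2) by auto
  moreover have "\<forall>z\<in>Z. poly g (\<gamma> z) = 0"
    using vanish Z(1) \<mu> by (fastforce simp: c_eq)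
  ultimately have "g = smult (coeff g (card Z)) (root_poly \<gamma> Z)"
    by (rule poly_eq_smult_root_poly)
  then have "poly g x = coeff g (card Z) * poly (root_poly \<gamma> Z) x" for x
    by (metis poly_smult)
  then show ?thesis
    by (auto simp: c_eq mult_ac)
qed

lemma GRS_codewords_product_proportional:
  fixes \<gamma> \<mu> :: "nat \<Rightarrow> 'a::field"
  assumes \<gamma>: "inj_on \<gamma> {..<N}" and \<mu>: "\<forall>i<N. \<mu> i \<noteq> 0"
    and words: "c1 \<in> GRS_code N k \<gamma> \<mu>" "c2 \<in> GRS_code N k \<gamma> \<mu>"
      "c3 \<in> GRS_code N k \<gamma> \<mu>" "c4 \<in> GRS_code N k \<gamma> \<mu>"
    and supports: "Z1 \<subseteq> {..<N}" "Z2 \<subseteq> {..<N}" "Z3 \<subseteq> {..<N}" "Z4 \<subseteq> {..<N}"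
    and sizes: "k \<le> Suc (card Z1)" "k \<le> Suc (card Z2)" "k \<le> Suc (card Z3)" "k \<le> Suc (card Z4)"
    and vanish: "\<forall>z\<in>Z1. c1 ! z = 0" "\<forall>z\<in>Z2. c2 ! z = 0"
      "\<forall>z\<in>Z3. c3 ! z = 0" "\<forall>z\<in>Z4. c4 ! z = 0"
    and union: "Z1 \<union> Z2 = Z3 \<union> Z4" and inter: "Z1 \<inter> Z2 = Z3 \<inter> Z4"
    and nonzero: "\<exists>i<N. c3 ! i \<noteq> 0" "\<exists>i<N. c4 ! i \<noteq> 0"
  shows "\<exists>K. \<forall>i<N. c1 ! i * c2 ! i = K * (c3 ! i * c4 ! i)"
proof -
  obtain K1 where K1: "\<forall>i<N. c1 ! i = K1 * \<mu> i * poly (root_poly \<gamma> Z1) (\<gamma> i)"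
    using GRS_codeword_vanishing_on[OF \<gamma> \<mu> words(1) supports(1) sizes(1) vanish(1)] by blast
  obtain K2 where K2: "\<forall>i<N. c2 ! i = K2 * \<mu> i * poly (root_poly \<gamma> Z2) (\<gamma> i)"
    using GRS_codeword_vanishing_on[OF \<gamma> \<mu> words(2) supports(2) sizes(2) vanish(2)] by blast
  obtain K3 where K3: "\<forall>i<N. c3 ! i = K3 * \<mu> i * poly (root_poly \<gamma> Z3) (\<gamma> i)"
    using GRS_codeword_vanishing_on[OF \<gamma> \<mu> words(3) supports(3) sizes(3) vanish(3)] by blast
  obtain K4 where K4: "\<forall>i<N. c4 ! i = K4 * \<mu> i * poly (root_poly \<gamma> Z4) (\<gamma> i)"
    using GRS_codeword_vanishing_on[OF \<gamma> \<mu> words(4) supports(4) sizes(4) vanish(4)] by blast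
  have "K3 \<noteq> 0" "K4 \<noteq> 0"
    using nonzero K3 K4 by auto
  have fin: "finite Z1" "finite Z2" "finite Z3" "finite Z4"
    using supports finite_subset by blast+
  have roots: "root_poly \<gamma> Z1 * root_poly \<gamma> Z2 = root_poly \<gamma> Z3 * root_poly \<gamma> Z4"
    unfolding root_poly_union_inter[OF fin(1,2)] root_poly_union_inter[OF fin(3,4)] union inter ..
  have "c1 ! i * c2 ! i = K1 * K2 / (K3 * K4) * (c3 ! i * c4 ! i)" if "i < N" for i
  proof -
    have "poly (root_poly \<gamma> Z1) (\<gamma> i) * poly (root_poly \<gamma> Z2) (\<gamma> i)
            = poly (root_poly \<gamma> Z3) (\<gamma> i) * poly (root_poly \<gamma> Z4) (\<gamma> i)"
      using roots by (metis poly_mult)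
    then show ?thesis
      using K1 K2 K3 K4 that \<open>K3 \<noteq> 0\<close> \<open>K4 \<noteq> 0\<close> by (simp add: field_simps)
  qed
  then show ?thesis
    by blast
qed

lemma GRS_code_vanishing_word_exists:
  fixes \<gamma> \<mu> :: "nat \<Rightarrow> 'a::field"
  assumes \<gamma>: "inj_on \<gamma> {..<N}" and \<mu>: "\<forall>i<N. \<mu> i \<noteq> 0"
    and Y: "Y \<subseteq> {..<N}" "card Y < k" and m: "m < N" "m \<notin> Y"
  shows "\<exists>c\<in>GRS_code N k \<gamma> \<mu>. (\<forall>y\<in>Y. c ! y = 0) \<and> c ! m \<noteq> 0"
proof -
  have fin: "finite Y"
    using Y(1) finite_subset by blast
  let ?c = "map (\<lambda>i. \<mu> i * poly (root_poly \<gamma> Y) (\<gamma> i)) [0..<N]"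
  have "?c \<in> GRS_code N k \<gamma> \<mu>"
    unfolding GRS_code_def using Y(2) degree_root_poly[OF fin, of \<gamma>] by auto
  moreover have "\<forall>y\<in>Y. ?c ! y = 0"
    using Y(1) fin by (auto simp: poly_root_poly_eq_0_iff)
  moreover have "?c ! m \<noteq> 0"
    using m \<mu> fin Y(1) poly_root_poly_at_point_eq_0_iff[OF \<gamma>, of Y m] by simp
  ultimately show ?thesis
    by blast
qed

text \<open>Codewords of \<open>code_C\<close> indexed by the polynomial \<open>f = \<Sum>i<k. f\<^sub>i x\<^sup>i\<close> rather than by
  the coefficient sequence \<open>f\<^sub>i\<close>.\<close>

definition C_word ::
    "nat \<Rightarrow> nat \<Rightarrow> (nat \<Rightarrow> 'a::field) \<Rightarrow> (nat \<Rightarrow> 'a) \<Rightarrow> 'a \<Rightarrow> 'a \<Rightarrow> 'a poly \<Rightarrow> 'a list" where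
  "C_word n k alpha v eta delta f =
     map (\<lambda>i. v i * poly (f + monom (eta * coeff f (k - 1)) (k + 2)) (alpha i)) [0..<n]
     @ [coeff f (k - 1), coeff f (k - 2), coeff f (k - 3) + delta * coeff f (k - 1)]"

lemma C_word_nth:
  "i < n \<Longrightarrow> C_word n k alpha v eta delta f ! i
     = v i * poly (f + monom (eta * coeff f (k - 1)) (k + 2)) (alpha i)"
  "C_word n k alpha v eta delta f ! n = coeff f (k - 1)"
  "C_word n k alpha v eta delta f ! Suc n = coeff f (k - 2)"
  "C_word n k alpha v eta delta f ! Suc (Suc n) = coeff f (k - 3) + delta * coeff f (k - 1)"
  by (simp_all add: C_word_def nth_append)

lemma S_poly_coeff:
  assumes "degree f < k"
  shows "S_poly k eta (coeff f) = f + monom (eta * coeff f (k - 1)) (k + 2)"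
proof -
  have "{..<k} = {..k - 1}"
    using assms by auto
  then have "(\<Sum>i<k. monom (coeff f i) i) = f"
    using assms by (simp add: poly_as_sum_of_monoms')
  then show ?thesis
    unfolding S_poly_def by simp
qed

lemma code_C_eq_image:
  assumes "0 < k"
  shows "code_C n k alpha v eta delta = C_word n k alpha v eta delta ` {f. degree f < k}"
proof (intro equalityI subsetI)
  fix c assume "c \<in> code_C n k alpha v eta delta"
  then obtain fc where c: "c = map (\<lambda>i. v i * poly (S_poly k eta fc) (alpha i)) [0..<n]
      @ [fc (k - 1), fc (k - 2), fc (k - 3) + delta * fc (k - 1)]"
    unfolding code_C_def by blast
  define f where "f = (\<Sum>i<k. monom (fc i) i)"
  have coeff_f: "coeff f j = fc j" if "j < k" for j
    using that by (simp add: f_def coeff_sum)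
  have "degree f < k"
    unfolding f_def using assms
    by (intro degree_sum_less) (auto intro: le_less_trans[OF degree_monom_le])
  moreover have "S_poly k eta fc = S_poly k eta (coeff f)"
    unfolding S_poly_def using assms coeff_f by simp
  ultimately have "c = C_word n k alpha v eta delta f"
    using assms by (simp add: c C_word_def S_poly_coeff coeff_f)
  then show "c \<in> C_word n k alpha v eta delta ` {f. degree f < k}"
    using \<open>degree f < k\<close> by blast
next
  fix c assume "c \<in> C_word n k alpha v eta delta ` {f. degree f < k}"
  then obtain f where "degree f < k" "c = C_word n k alpha v eta delta f"
    by blast
  then have "c = map (\<lambda>i. v i * poly (S_poly k eta (coeff f)) (alpha i)) [0..<n]
      @ [coeff f (k - 1), coeff f (k - 2), coeff f (k - 3) + delta * coeff f (k - 1)]"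
    by (simp add: C_word_def S_poly_coeff)
  then show "c \<in> code_C n k alpha v eta delta"
    unfolding code_C_def by blast
qed

locale code_C_as_GRS =
  fixes n k :: nat and alpha v :: "nat \<Rightarrow> 'a::field" and eta delta :: 'a
    and k' :: nat and \<gamma> \<mu> :: "nat \<Rightarrow> 'a"
  assumes alpha_inj: "inj_on alpha {..<n}" and v_nonzero: "\<forall>i<n. v i \<noteq> 0"
    and k_bounds: "3 \<le> k" "k \<le> n"
    and \<gamma>_inj: "inj_on \<gamma> {..<n + 3}" and \<mu>_nonzero: "\<forall>i<n + 3. \<mu> i \<noteq> 0"
    and code_C_eq_GRS: "code_C n k alpha v eta delta = GRS_code (n + 3) k' \<gamma> \<mu>"
begin

abbreviation word :: "'a poly \<Rightarrow> 'a list" where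
  "word \<equiv> C_word n k alpha v eta delta"

lemma word_in_GRS_code: "degree f < k \<Longrightarrow> word f \<in> GRS_code (n + 3) k' \<gamma> \<mu>"
  using code_C_eq_GRS code_C_eq_image[of k n alpha v eta delta] k_bounds by auto

lemma word_nth_if_coeff_0: "coeff f (k - 1) = 0 \<Longrightarrow> i < n \<Longrightarrow> word f ! i = v i * poly f (alpha i)"
  by (simp add: C_word_nth)

lemma GRS_dimension_le: "k' \<le> k"
proof (rule ccontr)
  assume "\<not> k' \<le> k"
  define Y where "Y = {n, n + 1, n + 2} \<union> {..<k - 3}"
  have "Y \<subseteq> {..<n + 3}" "card Y < k'" "k - 3 < n + 3" "k - 3 \<notin> Y"
    using k_bounds \<open>\<not> k' \<le> k\<close> by (auto simp: Y_def)
  then obtain c where "c \<in> code_C n k alpha v eta delta"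
      and vanish: "\<forall>y\<in>Y. c ! y = 0" and nonzero: "c ! (k - 3) \<noteq> 0"
    using GRS_code_vanishing_word_exists[OF \<gamma>_inj \<mu>_nonzero] code_C_eq_GRS by metis
  moreover have "0 < k"
    using k_bounds by simp
  ultimately obtain f where f: "degree f < k" and c: "c = word f"
    using code_C_eq_image by blast
  \<comment> \<open>the zeros at \<open>n, n + 1, n + 2\<close> kill the top three coefficients of \<open>f\<close>, and the
    remaining \<open>k - 3\<close> zeros then kill \<open>f\<close>\<close>
  have top: "coeff f (k - 1) = 0" "coeff f (k - 2) = 0" "coeff f (k - 3) = 0"
    using vanish by (auto simp: Y_def c C_word_nth)
  have "\<forall>j\<ge>k - 3. coeff f j = 0"
  proof (intro allI impI)
    fix j assume "k - 3 \<le> j"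
    then consider "j = k - 3" | "j = k - 2" | "j = k - 1" | "k \<le> j"
      by linarith
    then show "coeff f j = 0"
      by cases (use top f in \<open>auto intro: coeff_eq_0\<close>)
  qed
  moreover have "\<forall>x\<in>alpha ` {..<k - 3}. poly f x = 0"
    using vanish v_nonzero k_bounds top by (auto simp: Y_def c C_word_nth)
  moreover have "card (alpha ` {..<k - 3}) = k - 3"
    using k_bounds inj_on_subset[OF alpha_inj] by (subst card_image) auto
  ultimately have "f = 0"
    using poly_eq_0_if_roots[of "alpha ` {..<k - 3}" f] by simp
  then show False
    using nonzero k_bounds by (simp add: c C_word_nth)
qed

lemma word_root_poly_nonzero:
  assumes "m \<le> k - 2" "k - 2 \<le> i" "i < n"
  shows "word (root_poly alpha {..<m}) ! i \<noteq> 0"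
proof -
  have "coeff (root_poly alpha {..<m}) (k - 1) = 0"
    using assms(1) k_bounds by (intro coeff_eq_0) (simp add: degree_root_poly)
  moreover have "poly (root_poly alpha {..<m}) (alpha i) \<noteq> 0"
    using assms poly_root_poly_at_point_eq_0_iff[OF alpha_inj, of "{..<m}" i] by auto
  ultimately show ?thesis
    using assms(3) v_nonzero by (simp add: word_nth_if_coeff_0)
qed

lemma staircase_words_proportional:
  assumes k4: "4 \<le> k" and f2: "degree f2 = k - 2" "coeff f2 (k - 3) = 0"
    "\<forall>t\<in>insert (k - 3) {..<k - 4}. poly f2 (alpha t) = 0"
  shows "\<exists>K. \<forall>i<n + 3. word (root_poly alpha {..<k - 3}) ! i * word f2 ! i
            = K * (word (root_poly alpha {..<k - 2}) ! i * word (root_poly alpha {..<k - 4}) ! i)"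
proof -
  define f1 f3 f4 where "f1 = root_poly alpha {..<k - 3}" and "f3 = root_poly alpha {..<k - 2}"
    and "f4 = root_poly alpha {..<k - 4}"
  define Z1 Z2 Z3 Z4 where "Z1 = {n, n + 1} \<union> {..<k - 3}"
    and "Z2 = {n, n + 2} \<union> insert (k - 3) {..<k - 4}" and "Z3 = {n} \<union> {..<k - 2}"
    and "Z4 = {n, n + 1, n + 2} \<union> {..<k - 4}"
  have deg: "degree f1 = k - 3" "degree f3 = k - 2" "degree f4 = k - 4"
    by (simp_all add: f1_def f3_def f4_def degree_root_poly)
  then have coeffs: "coeff f1 (k - 1) = 0" "coeff f1 (k - 2) = 0" "coeff f2 (k - 1) = 0"
      "coeff f3 (k - 1) = 0" "coeff f4 (k - 1) = 0" "coeff f4 (k - 2) = 0" "coeff f4 (k - 3) = 0"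
    using f2(1) k4 by (auto intro: coeff_eq_0)
  have "\<forall>t<k - 3. poly f1 (alpha t) = 0" "\<forall>t<k - 2. poly f3 (alpha t) = 0"
      "\<forall>t<k - 4. poly f4 (alpha t) = 0"
    by (auto simp: f1_def f3_def f4_def poly_root_poly_eq_0_iff)
  then have "\<forall>z\<in>Z1. word f1 ! z = 0" "\<forall>z\<in>Z2. word f2 ! z = 0"
      "\<forall>z\<in>Z3. word f3 ! z = 0" "\<forall>z\<in>Z4. word f4 ! z = 0"
    using f2 coeffs k_bounds k4 by (auto simp: Z1_def Z2_def Z3_def Z4_def C_word_nth)
  moreover have "Z1 \<subseteq> {..<n + 3}" "Z2 \<subseteq> {..<n + 3}" "Z3 \<subseteq> {..<n + 3}" "Z4 \<subseteq> {..<n + 3}"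
      "Z1 \<union> Z2 = Z3 \<union> Z4" "Z1 \<inter> Z2 = Z3 \<inter> Z4"
    using k_bounds k4 by (auto simp: Z1_def Z2_def Z3_def Z4_def)
  moreover have "card Z1 = k - 1" "card Z2 = k - 1" "card Z3 = k - 1" "card Z4 = k - 1"
    using k_bounds k4 by (auto simp: Z1_def Z2_def Z3_def Z4_def card_insert_if)
  moreover have "\<exists>i<n + 3. word f3 ! i \<noteq> 0" "\<exists>i<n + 3. word f4 ! i \<noteq> 0"
    unfolding f3_def f4_def using k_bounds
    by (intro exI[of _ "k - 2"] conjI word_root_poly_nonzero; simp)+
  ultimately show ?thesis
    using GRS_codewords_product_proportional[OF \<gamma>_inj \<mu>_nonzero word_in_GRS_code word_in_GRS_code
        word_in_GRS_code word_in_GRS_code, of f1 f2 f3 f4] deg f2(1) k4 GRS_dimension_le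
    unfolding f1_def f3_def f4_def by auto
qed

lemma k_less_4: "k < 4"
proof (rule ccontr)
  assume "\<not> k < 4"
  then have k4: "4 \<le> k"
    by simp
  obtain f2 s where f2: "degree f2 = k - 2" "coeff f2 (k - 3) = 0"
      "\<forall>t\<in>insert (k - 3) {..<k - 4}. poly f2 (alpha t) = 0"
    and product: "root_poly alpha {..<k - 3} * f2
                    = root_poly alpha {..<k - 2} * root_poly alpha {..<k - 4} * [:- s, 1:]"
    using staircase_root_poly[OF k4, of alpha] by blast
  obtain K where K: "\<forall>i<n + 3. word (root_poly alpha {..<k - 3}) ! i * word f2 ! i
            = K * (word (root_poly alpha {..<k - 2}) ! i * word (root_poly alpha {..<k - 4}) ! i)"
    using staircase_words_proportional[OF k4 f2] by blast
  have "alpha i = s + K" if i: "k - 2 \<le> i" "i < n" for i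
  proof -
    let ?P = "\<lambda>m. poly (root_poly alpha {..<m}) (alpha i)"
    let ?X = "word (root_poly alpha {..<k - 2}) ! i * word (root_poly alpha {..<k - 4}) ! i"
    have "coeff (root_poly alpha {..<m}) (k - 1) = 0" if "m \<le> k - 2" for m
      using that k4 by (intro coeff_eq_0) (simp add: degree_root_poly)
    moreover have "coeff f2 (k - 1) = 0"
      using f2(1) k4 by (intro coeff_eq_0) simp
    ultimately have words: "word (root_poly alpha {..<m}) ! i = v i * ?P m"
        "word f2 ! i = v i * poly f2 (alpha i)"
      if "m \<le> k - 2" for m
      using i that by (simp_all add: word_nth_if_coeff_0)
    have "?P (k - 3) * poly f2 (alpha i) = (alpha i - s) * (?P (k - 2) * ?P (k - 4))"
      using arg_cong[OF product, of "\<lambda>p. poly p (alpha i)"] by (simp add: algebra_simps)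
    then have "word (root_poly alpha {..<k - 3}) ! i * word f2 ! i = (alpha i - s) * ?X"
      using words[of "k - 3"] words[of "k - 2"] words[of "k - 4"] by (simp add: ac_simps)
    moreover have "word (root_poly alpha {..<k - 3}) ! i * word f2 ! i = K * ?X"
      by (rule K[rule_format]) (use i in simp)
    moreover have "word (root_poly alpha {..<k - 2}) ! i \<noteq> 0"
        "word (root_poly alpha {..<k - 4}) ! i \<noteq> 0"
      using i by (intro word_root_poly_nonzero; simp)+
    ultimately have "alpha i - s = K"
      by (metis mult_cancel_right mult_eq_0_iff)
    then show ?thesis
      by (simp add: algebra_simps)
  qed
  then have "alpha (k - 2) = alpha (k - 1)"
    using k_bounds by simp
  then have "k - 2 = k - 1"
    using inj_onD[OF alpha_inj] k_bounds by simp
  then show False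
    using k_bounds by simp
qed

lemma quintic_relation_if_k_eq_3:
  defines "u x \<equiv> x ^ 2 + eta * x ^ 5"
  assumes k3: "k = 3"
  shows "\<exists>K. \<forall>i<n. (alpha i - alpha 0) * (u (alpha i) - u (alpha 1))
                   = K * ((alpha i - alpha 1) * (u (alpha i) - u (alpha 0)))"
proof -
  define l where "l j = [:- alpha j, 1:]" for j
  define q where "q j = monom 1 2 - [:u (alpha j):]" for j
  \<comment> \<open>\<open>coeff (q j) 2 = 1\<close> switches on the term \<open>\<eta> x\<^sup>5\<close> of the codeword\<close>
  have eval: "word (l j) ! i = v i * (alpha i - alpha j)"
    "word (q j) ! i = v i * (u (alpha i) - u (alpha j))" if "i < n" for i j
    using that k3
    by (simp_all add: C_word_nth l_def q_def u_def poly_monom coeff_monom numeral_2_eq_2 algebra_simps)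
  have tail: "word (l j) ! n = 0" "word (q j) ! n = 1" "word (q j) ! Suc n = 0" for j
    using k3 by (simp_all add: C_word_nth l_def q_def coeff_monom numeral_2_eq_2)
  have "degree (l j) < 3" "degree (q j) < 3" for j
    unfolding l_def q_def
    by (simp, rule le_less_trans[OF degree_diff_le[of _ 2]]) (auto simp: degree_monom_le)
  then have words: "word (l j) \<in> GRS_code (n + 3) k' \<gamma> \<mu>" "word (q j) \<in> GRS_code (n + 3) k' \<gamma> \<mu>"
    for j
    using k3 word_in_GRS_code by simp_all
  have "alpha 0 \<noteq> alpha 1"
    using k_bounds inj_onD[OF alpha_inj, of 0 1] by auto
  have vanish: "\<forall>z\<in>{n, 0}. word (l 0) ! z = 0" "\<forall>z\<in>{Suc n, 1}. word (q 1) ! z = 0"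
      "\<forall>z\<in>{n, 1}. word (l 1) ! z = 0" "\<forall>z\<in>{Suc n, 0}. word (q 0) ! z = 0"
    using eval tail k3 k_bounds by auto
  have "word (l 1) ! 0 \<noteq> 0" "word (q 0) ! n = 1"
    using eval(1)[of 0 1] tail(2) v_nonzero k3 k_bounds \<open>alpha 0 \<noteq> alpha 1\<close> by auto
  then have nonzero: "\<exists>i<n + 3. word (l 1) ! i \<noteq> 0" "\<exists>i<n + 3. word (q 0) ! i \<noteq> 0"
    by (intro exI[of _ 0], simp, intro exI[of _ n], simp)
  obtain K where
    K: "\<forall>i<n + 3. word (l 0) ! i * word (q 1) ! i = K * (word (l 1) ! i * word (q 0) ! i)"
    using GRS_codewords_product_proportional[OF \<gamma>_inj \<mu>_nonzero words(1)[of 0] words(2)[of 1]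
        words(1)[of 1] words(2)[of 0] _ _ _ _ _ _ _ _ vanish _ _ nonzero] GRS_dimension_le k3 k_bounds
    by auto
  have "(alpha i - alpha 0) * (u (alpha i) - u (alpha 1))
          = K * ((alpha i - alpha 1) * (u (alpha i) - u (alpha 0)))" if i: "i < n" for i
  proof -
    have "word (l 0) ! i * word (q 1) ! i = K * (word (l 1) ! i * word (q 0) ! i)"
      by (rule K[rule_format]) (use i in simp)
    then have "v i * v i * ((alpha i - alpha 0) * (u (alpha i) - u (alpha 1)))
          = v i * v i * (K * ((alpha i - alpha 1) * (u (alpha i) - u (alpha 0))))"
      by (simp only: eval[OF i]) (simp add: ac_simps)
    then show ?thesis
      using v_nonzero i by simp
  qed
  then show ?thesis
    by blast
qed

end

theorem theorem7:
  fixes alpha v :: "nat \<Rightarrow> 'a::{finite,field}"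
    and eta delta :: 'a
    and n k :: nat
  assumes "3 \<le> k" "k \<le> n" "n \<le> card (UNIV :: 'a set)"
    and "inj_on alpha {..<n}"
    and "\<forall>i<n. v i \<noteq> 0"
    and "eta \<noteq> 0"
    and "k + 4 \<le> n"
  shows "\<not> (\<exists>k' D. is_GRS_code (n + 3) k' D \<and>
                 monomially_equivalent (n + 3) (code_C n k alpha v eta delta) D)"
proof
  assume "\<exists>k' D. is_GRS_code (n + 3) k' D \<and>
                 monomially_equivalent (n + 3) (code_C n k alpha v eta delta) D"
  then obtain k' where "is_GRS_code (n + 3) k' (code_C n k alpha v eta delta)"
    using is_GRS_code_if_monomially_equivalent by (fastforce simp: code_C_def)
  then obtain \<gamma> \<mu> where "code_C_as_GRS n k alpha v eta delta k' \<gamma> \<mu>"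
    using assms unfolding is_GRS_code_def code_C_as_GRS_def by blast
  then interpret code_C_as_GRS n k alpha v eta delta k' \<gamma> \<mu> .
  have "k = 3"
    using k_less_4 assms(1) by simp
  then show False
    using quintic_relation_if_k_eq_3 quintic_relation_impossible[OF assms(4) _ assms(6)] assms(7)
    by fastforce
qed

end
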